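(* For all $m\ge2$ and $n\ge1$, the Hilbert tensor $\mathcal{H}\in\mathbb{S}_{m,n}$ is strongly completely positive.
   Context: The Hilbert tensor has entries $h_{i_1\ldots i_m}=\frac{1}{i_1+\dots+i_m-m+1}$, $i_j\in[n]$. A tensor $\mathcal{A}\in\mathbb{S}_{m,n}$ is strongly completely positive if $\mathcal{A}=\sum_{k=1}^r(u^{(k)})^m$ with $u^{(k)}\in\mathbb{R}^n_+$ and $\mathrm{span}\{u^{(1)},\dots,u^{(r)}\}=\mathbb{R}^n$, where $(u^m)_{i_1\ldots i_m}=u_{i_1}\cdots u_{i_m}$. *)

theory Defs
  imports "HOL-Analysis.Analysis"
begin

text \<open>Tensors of order m and dimension n are modelled as real-valued functions on
  index lists; only lists of length m with entries in {1..n} are relevant.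
  Vectors in R^n are functions nat => real, only the coordinates 1..n being relevant.\<close>

definition tensor_index_set :: "nat \<Rightarrow> nat \<Rightarrow> nat list set" where
  "tensor_index_set m n = {is. length is = m \<and> set is \<subseteq> {1..n}}"

definition hilbert_tensor :: "nat \<Rightarrow> nat list \<Rightarrow> real" where
  "hilbert_tensor m is = 1 / (real (sum_list is) - real m + 1)"

definition rank_one_power :: "(nat \<Rightarrow> real) \<Rightarrow> nat list \<Rightarrow> real" where
  "rank_one_power u is = (\<Prod>j<length is. u (is ! j))"

text \<open>The vectors u 0, ..., u (r-1) (viewed in R^n, i.e. on coordinates 1..n) span R^n:
  every x in R^n is a real linear combination of them. (The other inclusion of
  span = R^n is automatic.)\<close>
definition spans_Rn :: "nat \<Rightarrow> nat \<Rightarrow> (nat \<Rightarrow> nat \<Rightarrow> real) \<Rightarrow> bool" where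
  "spans_Rn n r u \<longleftrightarrow>
     (\<forall>x::nat \<Rightarrow> real. \<exists>c::nat \<Rightarrow> real. \<forall>i\<in>{1..n}. x i = (\<Sum>k<r. c k * u k i))"

definition strongly_completely_positive ::
    "nat \<Rightarrow> nat \<Rightarrow> (nat list \<Rightarrow> real) \<Rightarrow> bool" where
  "strongly_completely_positive m n A \<longleftrightarrow>
     (\<exists>r::nat. \<exists>u::nat \<Rightarrow> nat \<Rightarrow> real.
        (\<forall>k<r. \<forall>i\<in>{1..n}. u k i \<ge> 0) \<and>
        (\<forall>is\<in>tensor_index_set m n. A is = (\<Sum>k<r. rank_one_power (u k) is)) \<and>
        spans_Rn n r u)"

end

theory Submission
  imports Defs "HOL-Computational_Algebra.Polynomial"
begin

text \<open>Each entry of the Hilbert tensor is a moment: with S = i1 + ... + im - m we have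
  1/(S + 1) = integral of t^S over [0,1], and S <= m(n - 1). A Gauss quadrature rule on [0,1]
  with d = m(n - 1) + 1 nodes t_k and weights w_k > 0 is exact in degree S, so
  1/(S + 1) = sum_k w_k t_k^S, which is the entry at (i1,...,im) of the sum of the m-th powers
  of the nonnegative vectors u_k = w_k^(1/m) (1, t_k, ..., t_k^(n-1)). Since d >= n and the
  nodes are distinct, these vectors contain n rescaled rows of an invertible Vandermonde
  matrix, so they span R^n. The Gauss rule itself comes from the shifted Legendre polynomial
  P = (d/dx)^d (x(1 - x))^d: it is orthogonal to all polynomials of degree < d, and by
  Rolle's theorem it has d distinct roots in (0,1), which serve as the nodes.\<close>

definition integral01 :: "real poly \<Rightarrow> real" where
  "integral01 p = integral {0..1} (poly p)"

lemma poly_integrable_on_unit_interval: "poly p integrable_on {0..1::real}"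
  by (intro integrable_continuous_interval continuous_intros)

lemma integral01_add: "integral01 (p + q) = integral01 p + integral01 q"
  unfolding integral01_def poly_add by (simp add: integral_add poly_integrable_on_unit_interval)

lemma integral01_smult: "integral01 (smult c p) = c * integral01 p"
  unfolding integral01_def poly_smult by simp

lemma integral01_0 [simp]: "integral01 0 = 0"
proof -
  have "poly 0 = (\<lambda>_::real. 0)"
    by (rule ext) simp
  then show ?thesis
    by (simp add: integral01_def)
qed

lemma integral01_sum: "integral01 (\<Sum>k\<in>A. f k) = (\<Sum>k\<in>A. integral01 (f k))"
  by (induction A rule: infinite_finite_induct) (auto simp: integral01_add)

lemma integral01_pderiv: "integral01 (pderiv p) = poly p 1 - poly p 0"
proof -
  have "(poly (pderiv p) has_integral (poly p 1 - poly p 0)) {0..1}"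
    by (rule fundamental_theorem_of_calculus)
       (auto intro!: DERIV_subset[OF poly_DERIV]
             simp: has_real_derivative_iff_has_vector_derivative[symmetric])
  then show ?thesis
    unfolding integral01_def by (rule integral_unique)
qed

lemma integral01_monom: "integral01 (monom 1 s) = 1 / (real s + 1)"
proof -
  have "monom 1 s = pderiv (monom (1 / (real s + 1)) (Suc s))"
    by (simp add: pderiv_monom)
  then show ?thesis
    by (simp add: integral01_pderiv poly_monom)
qed

lemma integral01_pos:
  assumes nonneg: "\<And>x. 0 \<le> poly p x" and "0 < y" "y < 1" and "poly p y \<noteq> 0"
  shows "0 < integral01 p"
proof -
  have "0 \<le> integral01 p"
    unfolding integral01_def
    by (rule integral_nonneg[OF poly_integrable_on_unit_interval]) (simp add: nonneg)
  moreover have "integral01 p \<noteq> 0"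
  proof
    assume "integral01 p = 0"
    then have integral_0: "(poly p has_integral 0) (cbox 0 1)"
      using poly_integrable_on_unit_interval[of p]
      unfolding integral01_def cbox_interval by (metis integrable_integral)
    have "poly p y = 0"
    proof (rule has_integral_0_cbox_imp_0[of 0 1 "poly p" y])
      show "continuous_on (cbox 0 1) (poly p)"
        by (intro continuous_intros)
    qed (use assms integral_0 in auto)
    with \<open>poly p y \<noteq> 0\<close> show False ..
  qed
  ultimately show ?thesis
    by simp
qed

definition lagrange_basis :: "nat \<Rightarrow> (nat \<Rightarrow> 'a) \<Rightarrow> nat \<Rightarrow> 'a::field poly" where
  "lagrange_basis e t k = (\<Prod>j\<in>{..<e} - {k}. smult (1 / (t k - t j)) [:- t j, 1:])"

lemma poly_lagrange_basis:
  "poly (lagrange_basis e t k) x = (\<Prod>j\<in>{..<e} - {k}. (x - t j) / (t k - t j))"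
  unfolding lagrange_basis_def poly_prod by (simp add: diff_divide_distrib)

lemma degree_lagrange_basis:
  assumes "k < e"
  shows "degree (lagrange_basis e t k) \<le> e - 1"
proof -
  have "degree (lagrange_basis e t k)
      \<le> sum (degree \<circ> (\<lambda>j. smult (1 / (t k - t j)) [:- t j, 1:])) ({..<e} - {k})"
    unfolding lagrange_basis_def by (rule degree_prod_sum_le) simp
  also have "\<dots> \<le> (\<Sum>j\<in>{..<e} - {k}. 1)"
    by (intro sum_mono) (simp add: degree_smult_le)
  also have "\<dots> = e - 1"
    using assms by (simp add: card_Diff_singleton)
  finally show ?thesis .
qed

lemma poly_lagrange_basis_node:
  assumes "inj_on t {..<e}" "k < e" "j < e"
  shows "poly (lagrange_basis e t k) (t j) = (if j = k then 1 else 0)"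
proof (cases "j = k")
  case True
  have "t k - t i \<noteq> 0" if "i \<in> {..<e} - {k}" for i
    using that assms inj_onD[OF assms(1)] by fastforce
  then show ?thesis
    unfolding True poly_lagrange_basis by simp
next
  case False
  then have "j \<in> {..<e} - {k}"
    using assms by auto
  then have "(\<Prod>i\<in>{..<e} - {k}. (t j - t i) / (t k - t i)) = 0"
    by (intro prod_zero) auto
  then show ?thesis
    unfolding poly_lagrange_basis using False by simp
qed

lemma lagrange_interpolation:
  fixes p :: "'a::field poly"
  assumes inj: "inj_on t {..<e}" and deg: "degree p < e"
  shows "p = (\<Sum>k<e. smult (poly p (t k)) (lagrange_basis e t k))"
proof (rule ccontr)
  define q where "q = p - (\<Sum>k<e. smult (poly p (t k)) (lagrange_basis e t k))"
  assume "p \<noteq> (\<Sum>k<e. smult (poly p (t k)) (lagrange_basis e t k))"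
  then have "q \<noteq> 0"
    unfolding q_def by simp
  have "degree (\<Sum>k<e. smult (poly p (t k)) (lagrange_basis e t k)) \<le> e - 1"
    by (intro degree_sum_le)
       (use degree_lagrange_basis[of _ e t] in \<open>auto intro: order_trans[OF degree_smult_le]\<close>)
  then have "degree q < e"
    unfolding q_def using deg degree_diff_le_max[of p "\<Sum>k<e. smult (poly p (t k)) (lagrange_basis e t k)"]
    by linarith
  have "t ` {..<e} \<subseteq> {x. poly q x = 0}"
  proof clarify
    fix j assume "j < e"
    have "(\<Sum>k<e. poly p (t k) * poly (lagrange_basis e t k) (t j))
        = (\<Sum>k<e. if k = j then poly p (t j) else 0)"
      using \<open>j < e\<close> inj by (intro sum.cong refl) (auto simp: poly_lagrange_basis_node)
    also have "\<dots> = poly p (t j)"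
      using \<open>j < e\<close> by simp
    finally show "poly q (t j) = 0"
      unfolding q_def by (simp add: poly_sum)
  qed
  have "e = card (t ` {..<e})"
    using inj by (simp add: card_image)
  also have "\<dots> \<le> card {x. poly q x = 0}"
    by (intro card_mono poly_roots_finite \<open>q \<noteq> 0\<close>) fact
  also have "\<dots> \<le> degree q"
    by (rule card_poly_roots_bound[OF \<open>q \<noteq> 0\<close>])
  finally show False
    using \<open>degree q < e\<close> by simp
qed

lemma Min_Diff_Max:
  assumes "finite A" "A \<noteq> {}" "Min A \<noteq> Max A"
  shows "Min (A - {Max A}) = Min A"
  using assms by (intro Min_eqI) auto

text \<open>Rolle's theorem, applied between consecutive roots.\<close>
lemma pderiv_roots_between:
  fixes p :: "real poly"
  assumes "finite A" "A \<noteq> {}" "\<forall>x\<in>A. poly p x = 0"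
  shows "\<exists>B. finite B \<and> card B = card A - 1 \<and> B \<subseteq> {Min A<..<Max A} \<and>
             (\<forall>x\<in>B. poly (pderiv p) x = 0)"
  using assms
proof (induction "card A" arbitrary: A)
  case 0
  then show ?case by simp
next
  case (Suc c)
  show ?case
  proof (cases "c = 0")
    case True
    then show ?thesis
      using Suc by (intro exI[of _ "{}"]) auto
  next
    case False
    define A' where "A' = A - {Max A}"
    have "Max A \<in> A" and "finite A'" and "c = card A'"
      using Suc unfolding A'_def by auto
    then have "A' \<noteq> {}"
      using False by auto
    obtain B' where B': "finite B'" "card B' = card A' - 1" "B' \<subseteq> {Min A'<..<Max A'}"
      "\<forall>x\<in>B'. poly (pderiv p) x = 0"
      using Suc.hyps(1)[OF \<open>c = card A'\<close> \<open>finite A'\<close> \<open>A' \<noteq> {}\<close>] Suc.prems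
      unfolding A'_def by auto
    have "Max A' \<in> A" "Max A' \<noteq> Max A"
      using Max_in[OF \<open>finite A'\<close> \<open>A' \<noteq> {}\<close>] unfolding A'_def by auto
    then have lt: "Max A' < Max A"
      using Suc.prems(1) by (simp add: order.not_eq_order_implies_strict)
    have "Min A' = Min A"
      using Suc.prems(1,2) lt Min_le[OF Suc.prems(1) \<open>Max A' \<in> A\<close>] unfolding A'_def
      by (intro Min_Diff_Max) auto
    obtain z where z: "Max A' < z" "z < Max A"
      "poly p (Max A) - poly p (Max A') = (Max A - Max A') * poly (pderiv p) z"
      using poly_MVT[OF lt] by blast
    have "poly (pderiv p) z = 0"
      using z lt Suc.prems \<open>Max A \<in> A\<close> \<open>Max A' \<in> A\<close> by simp
    have "z \<notin> B'"
      using B'(3) z by auto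
    have "Min A' \<le> Max A'"
      using \<open>finite A'\<close> \<open>A' \<noteq> {}\<close> by simp
    show ?thesis
    proof (intro exI[of _ "insert z B'"] conjI)
      show "card (insert z B') = card A - 1"
        using B' \<open>z \<notin> B'\<close> \<open>c = card A'\<close> Suc.hyps(2) False by simp
      show "insert z B' \<subseteq> {Min A<..<Max A}"
        using B'(3) z \<open>Min A' = Min A\<close> \<open>Min A' \<le> Max A'\<close> by auto
    qed (use B' \<open>poly (pderiv p) z = 0\<close> in auto)
  qed
qed

lemma power_Suc_dvd_imp_dvd_pderiv:
  fixes r p :: "'a::idom poly"
  assumes "r ^ Suc j dvd p"
  shows "r ^ j dvd pderiv p"
proof -
  obtain s where p: "p = r ^ Suc j * s"
    using assms by (auto elim: dvdE)
  have "pderiv p = r ^ j * (r * pderiv s + s * smult (of_nat (Suc j)) (pderiv r))"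
    unfolding p pderiv_mult pderiv_power_Suc by (simp add: algebra_simps)
  then show ?thesis by simp
qed

lemma power_dvd_imp_dvd_higher_pderiv:
  fixes r p :: "'a::idom poly"
  assumes "r ^ d dvd p" "k \<le> d"
  shows "r ^ (d - k) dvd (pderiv ^^ k) p"
  using assms(2)
proof (induction k)
  case 0
  then show ?case using assms(1) by simp
next
  case (Suc k)
  then have "r ^ Suc (d - Suc k) dvd (pderiv ^^ k) p"
    by (simp add: Suc_diff_Suc)
  then show ?case
    by (simp add: power_Suc_dvd_imp_dvd_pderiv)
qed

text \<open>The k-th derivative of (x(1 - x))^d; for k = d this is the shifted Legendre polynomial
  of degree d, up to a constant factor.\<close>
definition rodrigues_deriv :: "nat \<Rightarrow> nat \<Rightarrow> real poly" where
  "rodrigues_deriv d k = (pderiv ^^ k) ([:0, 1, -1:] ^ d)"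

lemma rodrigues_deriv_Suc: "rodrigues_deriv d (Suc k) = pderiv (rodrigues_deriv d k)"
  by (simp add: rodrigues_deriv_def)

lemma degree_rodrigues_deriv: "degree (rodrigues_deriv d k) = 2 * d - k"
proof (induction k)
  case 0
  have "degree [:0, 1, -1::real:] = 2"
    by simp
  then show ?case
    by (simp add: rodrigues_deriv_def degree_power_eq)
next
  case (Suc k)
  then show ?case
    by (simp add: rodrigues_deriv_Suc degree_pderiv)
qed

lemma poly_rodrigues_deriv_endpoints:
  assumes "k < d"
  shows "poly (rodrigues_deriv d k) 0 = 0" and "poly (rodrigues_deriv d k) 1 = 0"
proof -
  have root_dvd: "[:- a, 1:] dvd rodrigues_deriv d k"
    if "[:- a, 1:] ^ d dvd [:0, 1, -1:] ^ d" for a :: real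
  proof -
    have "[:- a, 1:] ^ (d - k) dvd rodrigues_deriv d k"
      unfolding rodrigues_deriv_def using that assms
      by (intro power_dvd_imp_dvd_higher_pderiv) auto
    then show ?thesis
      using assms by (metis dvd_power dvd_trans zero_less_diff)
  qed
  have "[:0, 1, -1::real:] = [:- 0, 1:] * [:1, -1:]" "[:0, 1, -1::real:] = [:- 1, 1:] * [:0, -1:]"
    by simp_all
  then have "[:- 0, 1:] dvd rodrigues_deriv d k" "[:- 1, 1:] dvd rodrigues_deriv d k"
    by (metis root_dvd dvd_triv_left power_mult_distrib)+
  then show "poly (rodrigues_deriv d k) 0 = 0" "poly (rodrigues_deriv d k) 1 = 0"
    by (simp_all add: poly_eq_0_iff_dvd)
qed

lemma rodrigues_deriv_roots:
  assumes "k \<le> d"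
  shows "\<exists>Z. finite Z \<and> card Z = k \<and> Z \<subseteq> {0<..<1} \<and>
             (\<forall>x\<in>Z. poly (rodrigues_deriv d k) x = 0)"
  using assms
proof (induction k)
  case 0
  then show ?case by (intro exI[of _ "{}"]) auto
next
  case (Suc k)
  then obtain Z where Z: "finite Z" "card Z = k" "Z \<subseteq> {0<..<1}"
    "\<forall>x\<in>Z. poly (rodrigues_deriv d k) x = 0"
    by auto
  define A where "A = insert 0 (insert 1 Z)"
  have "(0::real) \<notin> insert 1 Z" "(1::real) \<notin> Z"
    using Z(3) by auto
  then have "finite A" "A \<noteq> {}" "card A = k + 2"
    using Z unfolding A_def by auto
  moreover have "Min A = 0" "Max A = 1"
    using Z unfolding A_def by (auto intro!: Min_eqI Max_eqI simp del: Min_insert Max_insert)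
  moreover have "\<forall>x\<in>A. poly (rodrigues_deriv d k) x = 0"
    using Z poly_rodrigues_deriv_endpoints[of k d] Suc.prems unfolding A_def by auto
  ultimately show ?case
    using pderiv_roots_between[of A "rodrigues_deriv d k"] by (auto simp: rodrigues_deriv_Suc)
qed

text \<open>Integration by parts k times; the boundary terms vanish at both endpoints.\<close>
lemma integral01_mult_rodrigues_deriv:
  assumes "k \<le> d" "degree q < k"
  shows "integral01 (q * rodrigues_deriv d k) = 0"
  using assms
proof (induction k arbitrary: q)
  case 0
  then show ?case by simp
next
  case (Suc k)
  let ?g = "rodrigues_deriv d k"
  have "integral01 (q * rodrigues_deriv d (Suc k))
      = integral01 (pderiv (q * ?g)) - integral01 (?g * pderiv q)"
    by (simp add: rodrigues_deriv_Suc pderiv_mult integral01_add)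
  also have "integral01 (pderiv (q * ?g)) = 0"
    using poly_rodrigues_deriv_endpoints[of k d] Suc.prems by (simp add: integral01_pderiv)
  also have "integral01 (?g * pderiv q) = 0"
  proof (cases "pderiv q = 0")
    case False
    then have "degree (pderiv q) < k"
      using Suc.prems by (simp add: degree_pderiv pderiv_eq_0_iff)
    then show ?thesis
      using Suc.IH[of "pderiv q"] Suc.prems by (simp add: mult.commute)
  qed simp
  finally show ?case
    by simp
qed

text \<open>A quadrature rule whose d distinct nodes are roots of a polynomial P of degree d that is
  orthogonal to all polynomials of degree < d is exact up to degree 2d - 1: divide by P and
  interpolate the remainder.\<close>
lemma quadrature_exact_at_orthogonal_roots:
  assumes inj: "inj_on t {..<d}"
    and degP: "degree P = d" and "d \<ge> 1"
    and roots: "\<And>k. k < d \<Longrightarrow> poly P (t k) = 0"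
    and orth: "\<And>q. degree q < d \<Longrightarrow> integral01 (q * P) = 0"
    and degp: "degree p < 2 * d"
  shows "integral01 p = (\<Sum>k<d. integral01 (lagrange_basis d t k) * poly p (t k))"
proof -
  have "P \<noteq> 0"
    using degP \<open>d \<ge> 1\<close> by auto
  define s where "s = p div P"
  define r where "r = p mod P"
  have p_eq: "p = s * P + r"
    unfolding s_def r_def by simp
  have "degree r < d"
    using degree_mod_less[OF \<open>P \<noteq> 0\<close>, of p] \<open>d \<ge> 1\<close> degP unfolding r_def by auto
  have "degree s < d"
  proof (cases "s = 0")
    case False
    have "degree (s * P) = degree s + d"
      using False \<open>P \<noteq> 0\<close> degP by (simp add: degree_mult_eq)
    moreover have "degree (s * P) < 2 * d"
      using degree_diff_le_max[of p r] degp \<open>degree r < d\<close> p_eq by (simp add: algebra_simps)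
    ultimately show ?thesis
      by simp
  qed (use \<open>d \<ge> 1\<close> in simp)
  have "integral01 p = integral01 r"
    using orth[OF \<open>degree s < d\<close>] p_eq by (simp add: integral01_add)
  also have "\<dots> = (\<Sum>k<d. poly r (t k) * integral01 (lagrange_basis d t k))"
    by (subst lagrange_interpolation[OF inj \<open>degree r < d\<close>])
       (simp add: integral01_sum integral01_smult)
  also have "\<dots> = (\<Sum>k<d. integral01 (lagrange_basis d t k) * poly p (t k))"
    using roots by (intro sum.cong refl) (simp add: p_eq)
  finally show ?thesis .
qed

lemma quadrature_weight_pos:
  assumes inj: "inj_on t {..<d}" and "k < d" and "0 < t k" "t k < 1"
    and exact: "\<And>p. degree p < 2 * d \<Longrightarrow> integral01 p = (\<Sum>j<d. w j * poly p (t j))"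
  shows "0 < w k"
proof -
  let ?L = "lagrange_basis d t k"
  have "degree (?L ^ 2) < 2 * d"
    using degree_power_le[of ?L 2] degree_lagrange_basis[OF \<open>k < d\<close>, of t] \<open>k < d\<close> by linarith
  then have "integral01 (?L ^ 2) = (\<Sum>j<d. w j * (poly ?L (t j))\<^sup>2)"
    by (simp add: exact)
  also have "\<dots> = (\<Sum>j<d. if j = k then w k else 0)"
    using \<open>k < d\<close> inj by (intro sum.cong refl) (auto simp: poly_lagrange_basis_node)
  also have "\<dots> = w k"
    using \<open>k < d\<close> by simp
  finally have "w k = integral01 (?L ^ 2)"
    by simp
  also have "\<dots> > 0"
    using assms by (intro integral01_pos[of _ "t k"]) (auto simp: poly_lagrange_basis_node)
  finally show ?thesis .
qed

lemma gauss_quadrature: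
  assumes "d \<ge> 1"
  obtains t w where "inj_on t {..<d}" and "\<And>k. k < d \<Longrightarrow> 0 < t k \<and> t k < 1 \<and> 0 < w k"
    and "\<And>p. degree p < 2 * d \<Longrightarrow> integral01 p = (\<Sum>k<d. w k * poly p (t k))"
proof -
  obtain Z where Z: "finite Z" "card Z = d" "Z \<subseteq> {0<..<1}"
    "\<forall>x\<in>Z. poly (rodrigues_deriv d d) x = 0"
    using rodrigues_deriv_roots[of d d] by auto
  define t where "t k = sorted_list_of_set Z ! k" for k
  have len: "length (sorted_list_of_set Z) = d"
    using Z by simp
  have inj: "inj_on t {..<d}"
    unfolding t_def using len by (intro inj_onI) (simp add: nth_eq_iff_index_eq)
  have tZ: "t k \<in> Z" if "k < d" for k
    using that len Z(1) unfolding t_def by (metis nth_mem set_sorted_list_of_set)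
  define w where "w k = integral01 (lagrange_basis d t k)" for k
  have exact: "integral01 p = (\<Sum>k<d. w k * poly p (t k))" if "degree p < 2 * d" for p
    unfolding w_def
    using Z(4) tZ that assms
    by (intro quadrature_exact_at_orthogonal_roots[OF inj])
       (auto simp: degree_rodrigues_deriv integral01_mult_rodrigues_deriv)
  have "0 < t k \<and> t k < 1 \<and> 0 < w k" if "k < d" for k
    using tZ[OF that] Z(3) quadrature_weight_pos[OF inj that _ _ exact] by auto
  with inj exact show ?thesis
    using that by blast
qed

lemma rank_one_power_scaled_geometric:
  assumes "length is = m" "0 < m" "0 \<le> w"
  shows "rank_one_power (\<lambda>i. root m w * t ^ (i - 1)) is = w * t ^ (\<Sum>j<m. is ! j - 1)"
proof -
  have "rank_one_power (\<lambda>i. root m w * t ^ (i - 1)) is = (\<Prod>j<m. root m w * t ^ (is ! j - 1))"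
    unfolding rank_one_power_def using assms by simp
  also have "\<dots> = root m w ^ m * (\<Prod>j<m. t ^ (is ! j - 1))"
    by (simp add: prod.distrib)
  also have "\<dots> = w * t ^ (\<Sum>j<m. is ! j - 1)"
    using assms by (simp add: power_sum)
  finally show ?thesis .
qed

lemma hilbert_tensor_eq_moment:
  assumes "is \<in> tensor_index_set m n"
  shows "hilbert_tensor m is = integral01 (monom 1 (\<Sum>j<m. is ! j - 1))"
    and "(\<Sum>j<m. is ! j - 1) \<le> m * (n - 1)"
proof -
  have len: "length is = m" and entries: "\<And>j. j < m \<Longrightarrow> is ! j \<in> {1..n}"
    using assms nth_mem unfolding tensor_index_set_def by fastforce+
  have "real (\<Sum>j<m. is ! j - 1) = (\<Sum>j<m. real (is ! j) - 1)"
    unfolding of_nat_sum using entries by (intro sum.cong refl) (simp add: of_nat_diff)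
  also have "\<dots> = real (sum_list is) - real m"
    using len by (simp add: sum_list_sum_nth sum_subtractf atLeast0LessThan)
  finally show "hilbert_tensor m is = integral01 (monom 1 (\<Sum>j<m. is ! j - 1))"
    unfolding hilbert_tensor_def integral01_monom by simp
  have "(\<Sum>j<m. is ! j - 1) \<le> (\<Sum>j<m. n - 1)"
    using entries by (intro sum_mono) (simp add: diff_le_mono)
  then show "(\<Sum>j<m. is ! j - 1) \<le> m * (n - 1)"
    by simp
qed

text \<open>The coefficients of the Lagrange basis polynomials provide the inverse of the
  Vandermonde matrix.\<close>
lemma spans_Rn_scaled_geometric:
  assumes inj: "inj_on t {..<n}" and "n \<le> d" and nz: "\<And>k. k < n \<Longrightarrow> a k \<noteq> 0"
  shows "spans_Rn n d (\<lambda>k i. a k * t k ^ (i - 1))"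
  unfolding spans_Rn_def
proof
  fix x :: "nat \<Rightarrow> real"
  define c where "c k = (if k < n then (\<Sum>j<n. coeff (lagrange_basis n t k) j * x (Suc j)) / a k
    else 0)" for k
  have "x i = (\<Sum>k<d. c k * (a k * t k ^ (i - 1)))" if i: "i \<in> {1..n}" for i
  proof -
    have kronecker: "(\<Sum>k<n. t k ^ (i - 1) * coeff (lagrange_basis n t k) j)
        = (if j = i - 1 then 1 else 0)" for j
    proof -
      have "degree (monom (1::real) (i - 1)) < n"
        using i by (auto simp: degree_monom_eq)
      from lagrange_interpolation[OF inj this]
      have "monom 1 (i - 1) = (\<Sum>k<n. smult (t k ^ (i - 1)) (lagrange_basis n t k))"
        by (simp add: poly_monom)
      then show ?thesis
        by (metis (no_types, lifting) coeff_monom coeff_smult coeff_sum sum.cong)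
    qed
    have "(\<Sum>k<d. c k * (a k * t k ^ (i - 1))) = (\<Sum>k<n. c k * (a k * t k ^ (i - 1)))"
      by (rule sum.mono_neutral_right) (use \<open>n \<le> d\<close> in \<open>auto simp: c_def\<close>)
    also have "\<dots> = (\<Sum>k<n. t k ^ (i - 1) * (\<Sum>j<n. coeff (lagrange_basis n t k) j * x (Suc j)))"
      by (intro sum.cong refl) (simp add: c_def nz)
    also have "\<dots> = (\<Sum>k<n. \<Sum>j<n. x (Suc j) * (t k ^ (i - 1) * coeff (lagrange_basis n t k) j))"
      by (simp add: sum_distrib_left mult_ac)
    also have "\<dots> = (\<Sum>j<n. x (Suc j) * (\<Sum>k<n. t k ^ (i - 1) * coeff (lagrange_basis n t k) j))"
      by (subst sum.swap) (simp add: sum_distrib_left)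
    also have "\<dots> = (\<Sum>j<n. if j = i - 1 then x (Suc j) else 0)"
      unfolding kronecker by (simp add: if_distrib cong: if_cong)
    also have "\<dots> = x i"
      using i by auto
    finally show ?thesis ..
  qed
  then show "\<exists>c. \<forall>i\<in>{1..n}. x i = (\<Sum>k<d. c k * (a k * t k ^ (i - 1)))"
    by blast
qed

lemma hilbert_tensor_eq_sum_rank_one_power:
  assumes "is \<in> tensor_index_set m n" and "0 < m"
    and nonneg: "\<And>k. k < d \<Longrightarrow> 0 \<le> w k"
    and exact: "\<And>p. degree p \<le> m * (n - 1) \<Longrightarrow> integral01 p = (\<Sum>k<d. w k * poly p (t k))"
  shows "hilbert_tensor m is = (\<Sum>k<d. rank_one_power (\<lambda>i. root m (w k) * t k ^ (i - 1)) is)"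
proof -
  define S where "S = (\<Sum>j<m. is ! j - 1)"
  have "length is = m"
    using assms(1) unfolding tensor_index_set_def by simp
  have "hilbert_tensor m is = integral01 (monom 1 S)"
    unfolding S_def by (rule hilbert_tensor_eq_moment[OF assms(1)])
  also have "\<dots> = (\<Sum>k<d. w k * t k ^ S)"
    using hilbert_tensor_eq_moment(2)[OF assms(1)] unfolding S_def
    by (simp add: exact degree_monom_eq poly_monom)
  also have "\<dots> = (\<Sum>k<d. rank_one_power (\<lambda>i. root m (w k) * t k ^ (i - 1)) is)"
    unfolding S_def using \<open>length is = m\<close> \<open>0 < m\<close> nonneg
    by (intro sum.cong refl)
       (use rank_one_power_scaled_geometric[OF \<open>length is = m\<close> \<open>0 < m\<close> nonneg] in auto)
  finally show ?thesis .
qed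

theorem mainTheorem19:
  fixes m n :: nat
  assumes "m \<ge> 2" and "n \<ge> 1"
  shows "strongly_completely_positive m n (hilbert_tensor m)"
proof -
  define d where "d = m * (n - 1) + 1"
  obtain t w where inj: "inj_on t {..<d}"
    and nodes: "\<And>k. k < d \<Longrightarrow> 0 < t k \<and> t k < 1 \<and> 0 < w k"
    and exact: "\<And>p. degree p < 2 * d \<Longrightarrow> integral01 p = (\<Sum>k<d. w k * poly p (t k))"
    using gauss_quadrature[of d] unfolding d_def by auto
  define u where "u k i = root m (w k) * t k ^ (i - 1)" for k i
  have "1 * (n - 1) \<le> m * (n - 1)"
    using assms by (intro mult_le_mono1) simp
  then have "n \<le> d"
    unfolding d_def using assms(2) by linarith
  have "root m (w k) \<noteq> 0" if "k < n" for k
    using nodes[of k] that \<open>n \<le> d\<close> assms(1) by simp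
  show ?thesis
    unfolding strongly_completely_positive_def
  proof (intro exI[of _ d] exI[of _ u] conjI)
    show "\<forall>k<d. \<forall>i\<in>{1..n}. 0 \<le> u k i"
      unfolding u_def using nodes by (simp add: real_root_ge_zero order.strict_implies_order)
    show "\<forall>is\<in>tensor_index_set m n. hilbert_tensor m is = (\<Sum>k<d. rank_one_power (u k) is)"
      unfolding u_def using assms nodes exact
      by (intro ballI hilbert_tensor_eq_sum_rank_one_power) (auto simp: d_def less_imp_le)
    show "spans_Rn n d u"
      unfolding u_def using \<open>n \<le> d\<close> \<open>\<And>k. k < n \<Longrightarrow> root m (w k) \<noteq> 0\<close>
      by (intro spans_Rn_scaled_geometric inj_on_subset[OF inj]) auto
  qed
qed

end
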